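(* Let $b>1$, $p\ge1$, $R\subseteq\{0,\ldots,p-1\}$, $I\subseteq\mathbb{N}$ finite and non-empty, and let $k$ be the greatest divisor of $p$ coprime with $b$. Let $(s,t)$ and $(s',t')$ be two states of $\mathcal{C}_{R,p,I}$ with $s\equiv s'\pmod k$. If neither $(s,t)$ nor $(s',t')$ is the initial state, then $(s,t)$ and $(s',t')$ are ultimately-equivalent.
   Context: $A_b=\{0,\ldots,b-1\}$. $\mathcal{A}_{R,p}$: states $\{0,\ldots,p-1\}$, initial $0$, final $R$, transitions $n\xrightarrow{a}(nb+a)\bmod p$. With $m=\max I$, $\mathcal{B}_I$: states $\{0,\ldots,m\}\cup\{\bot\}$, initial $0$, final $I$, transitions $i\xrightarrow{a}ib+a$ if $ib+a\le m$, else $i\xrightarrow{a}\bot$, and $\bot\xrightarrow{a}\bot$. $\mathcal{C}_{R,p,I}$ is the accessible part (states reachable from the initial state $(0,0)$) of the product of $\mathcal{A}_{R,p}$ and $\mathcal{B}_I$, with componentwise transitions and $(s,t)$ final iff exactly one of $s\in R$, $t\in I$ holds. Two states $x,y$ are ultimately-equivalent if there is $m\ge1$ with $x\cdot u=y\cdot u$ for all words $u$ with $|u|\ge m$ ($x\cdot u$ = state reached from $x$ reading $u$). *)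

theory Defs
  imports Main
begin

definition words :: "nat \<Rightarrow> nat list set" where
  "words b = {u. set u \<subseteq> {0..<b}}"

definition A_step :: "nat \<Rightarrow> nat \<Rightarrow> nat \<Rightarrow> nat \<Rightarrow> nat" where
  "A_step b p n a = (n * b + a) mod p"

(* B_I: states {0..max I} plus bottom (None) *)
definition B_step :: "nat \<Rightarrow> nat set \<Rightarrow> nat option \<Rightarrow> nat \<Rightarrow> nat option" where
  "B_step b I t a = (case t of None \<Rightarrow> None
      | Some i \<Rightarrow> (if i * b + a \<le> Max I then Some (i * b + a) else None))"

definition C_step :: "nat \<Rightarrow> nat \<Rightarrow> nat set \<Rightarrow> nat \<times> nat option \<Rightarrow> nat \<Rightarrow> nat \<times> nat option" where
  "C_step b p I x a = (A_step b p (fst x) a, B_step b I (snd x) a)"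

definition C_run :: "nat \<Rightarrow> nat \<Rightarrow> nat set \<Rightarrow> nat \<times> nat option \<Rightarrow> nat list \<Rightarrow> nat \<times> nat option" where
  "C_run b p I x u = foldl (C_step b p I) x u"

definition C_init :: "nat \<times> nat option" where
  "C_init = (0, Some 0)"

(* states of C_{R,p,I}: accessible part of the product *)
definition C_states :: "nat \<Rightarrow> nat \<Rightarrow> nat set \<Rightarrow> (nat \<times> nat option) set" where
  "C_states b p I = {C_run b p I C_init u | u. u \<in> words b}"

definition C_final :: "nat set \<Rightarrow> nat set \<Rightarrow> (nat \<times> nat option) set" where
  "C_final R I = {(s, t). (s \<in> R) \<noteq> (case t of Some i \<Rightarrow> i \<in> I | None \<Rightarrow> False)}"

definition ult_equiv :: "nat \<Rightarrow> nat \<Rightarrow> nat set \<Rightarrow> nat \<times> nat option \<Rightarrow> nat \<times> nat option \<Rightarrow> bool" where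
  "ult_equiv b p I x y = (\<exists>m\<ge>1. \<forall>u \<in> words b. length u \<ge> m \<longrightarrow> C_run b p I x u = C_run b p I y u)"

definition coprime_part :: "nat \<Rightarrow> nat \<Rightarrow> nat" where
  "coprime_part b p = (GREATEST d. d dvd p \<and> coprime d b)"

end

theory Submission
  imports Defs
begin

text \<open>Both components of a run are governed by the base-b value val u of the word read.
Reading u from a live state i of B leads to i b^|u| + val u, so from any state other than 0
the B-component has fallen into the sink once |u| > max I. The A-component after a nonempty
word is (s b^|u| + val u) mod p; writing p = k g with k the coprime part and g dividing a power
of b, the term s b^|u| mod p only depends on s mod k. Finally, from the initial state the two
components stay linked by s = j mod p, so the only accessible state with B-component 0 is the
initial one.\<close>

definition word_value :: "nat \<Rightarrow> nat list \<Rightarrow> nat" where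
  "word_value b u = foldl (\<lambda>n a. n * b + a) 0 u"

lemma foldl_horner:
  "foldl (\<lambda>n a. n * b + a) s u = s * b ^ length u + word_value b u"
proof (induction u arbitrary: s)
  case Nil
  then show ?case by (simp add: word_value_def)
next
  case (Cons a u)
  have "word_value b (a # u) = a * b ^ length u + word_value b u"
    using Cons.IH[of a] by (simp add: word_value_def)
  then show ?case
    using Cons.IH[of "s * b + a"] by (simp add: algebra_simps)
qed

lemma C_run_eq:
  "C_run b p I x u = (foldl (A_step b p) (fst x) u, foldl (B_step b I) (snd x) u)"
  unfolding C_run_def by (induction u arbitrary: x) (auto simp: C_step_def)

lemma A_run_mod:
  "foldl (A_step b p) s u mod p = (s * b ^ length u + word_value b u) mod p"
proof (induction u rule: rev_induct)
  case Nil
  then show ?case by (simp add: word_value_def)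
next
  case (snoc a u)
  have "foldl (A_step b p) s (u @ [a]) mod p = (foldl (A_step b p) s u mod p * b + a) mod p"
    by (simp add: A_step_def) (metis mod_add_left_eq mod_mult_left_eq)
  also have "\<dots> = ((s * b ^ length u + word_value b u) * b + a) mod p"
    using snoc by (metis mod_add_left_eq mod_mult_left_eq)
  also have "\<dots> = foldl (\<lambda>n a. n * b + a) s (u @ [a]) mod p"
    by (simp add: foldl_horner[of b s u])
  finally show ?case
    by (simp only: foldl_horner)
qed

lemma A_run_nonempty:
  assumes "u \<noteq> []"
  shows "foldl (A_step b p) s u = (s * b ^ length u + word_value b u) mod p"
proof -
  obtain v a where "u = v @ [a]" using assms rev_exhaust by blast
  then have "foldl (A_step b p) s u mod p = foldl (A_step b p) s u"
    by (simp add: A_step_def)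
  then show ?thesis using A_run_mod by metis
qed

lemma mod_mult_dvd_cong:
  fixes s s' k g c :: nat
  assumes "s mod k = s' mod k" and "g dvd c"
  shows "s * c mod (k * g) = s' * c mod (k * g)"
proof -
  obtain e where c: "c = g * e" using assms(2) by blast
  have "s * g mod (k * g) = s' * g mod (k * g)"
    using assms(1) by (simp add: mod_mult_mult2)
  then have "s * g * e mod (k * g) = s' * g * e mod (k * g)"
    by (metis mod_mult_left_eq)
  then show ?thesis by (simp add: c mult.assoc)
qed

lemma coprime_part_dvd_coprime:
  assumes "p > 0"
  shows "coprime_part b p dvd p \<and> coprime (coprime_part b p) b"
  unfolding coprime_part_def
  by (rule GreatestI_nat[of _ 1 p]) (use assms in \<open>auto intro: dvd_imp_le\<close>)

lemma le_coprime_part: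
  assumes "p > 0" and "d dvd p" and "coprime d b"
  shows "d \<le> coprime_part b p"
  unfolding coprime_part_def
  by (rule Greatest_le_nat[of _ d p]) (use assms in \<open>auto intro: dvd_imp_le\<close>)

lemma gcd_power_stabilizes:
  fixes p b :: nat
  assumes "p > 0"
  shows "\<exists>n. gcd p (b ^ n) = gcd p (b ^ Suc n)"
proof (rule ccontr)
  assume unstable: "\<not> ?thesis"
  have grow: "gcd p (b ^ n) < gcd p (b ^ Suc n)" for n
  proof -
    have "gcd p (b ^ n) dvd gcd p (b ^ Suc n)" by (simp add: gcd_mono)
    then have "gcd p (b ^ n) \<le> gcd p (b ^ Suc n)" using assms by (simp add: dvd_imp_le)
    then show ?thesis using unstable by (simp add: order_less_le)
  qed
  have "n < gcd p (b ^ n)" for n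
  proof (induction n)
    case (Suc n)
    then show ?case using grow[of n] by simp
  qed simp
  then have "p < gcd p (b ^ p)" .
  moreover have "gcd p (b ^ p) \<le> p" using assms by (simp add: dvd_imp_le)
  ultimately show False by simp
qed

lemma coprime_cofactor_of_stable_gcd:
  fixes p b :: nat
  assumes "p > 0" and stable: "gcd p (b ^ n) = gcd p (b ^ Suc n)"
  shows "coprime (p div gcd p (b ^ n)) b"
proof -
  define g where "g = gcd p (b ^ n)"
  define c where "c = gcd (p div g) b"
  have p: "p = g * (p div g)" by (simp add: g_def)
  have "g * c dvd p"
    by (subst p, rule mult_dvd_mono) (simp_all add: c_def)
  moreover have "g * c dvd b ^ n * b"
    by (rule mult_dvd_mono) (simp_all add: c_def g_def)
  ultimately have "g * c dvd g"
    using stable gcd_greatest unfolding g_def by (metis power_Suc2)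
  moreover have "g > 0" using assms(1) by (simp add: g_def)
  ultimately have "c = 1" by (simp only: dvd_mult_cancel1)
  then show ?thesis
    unfolding coprime_iff_gcd_eq_1 g_def[symmetric] c_def[symmetric] .
qed

lemma coprime_part_mult_gcd_power:
  fixes p b :: nat
  assumes "p > 0"
  obtains n where "coprime_part b p * gcd p (b ^ n) = p"
proof -
  obtain n where stable: "gcd p (b ^ n) = gcd p (b ^ Suc n)"
    using gcd_power_stabilizes[OF assms] by blast
  define k where "k = coprime_part b p"
  define g where "g = gcd p (b ^ n)"
  have k: "k dvd p" "coprime k b"
    using coprime_part_dvd_coprime[OF assms] by (simp_all add: k_def)
  have "coprime k (b ^ n)" using k(2) by simp
  then have "coprime k g"
    unfolding g_def by (metis coprime_divisors dvd_refl gcd_dvd2)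
  then have "k * g dvd p"
    using k(1) by (simp add: g_def divides_mult)
  then have "k * g \<le> p" using assms by (rule dvd_imp_le)
  moreover have "p div g dvd p"
    by (metis dvd_div_mult_self dvd_triv_left gcd_dvd1 g_def)
  then have "p div g \<le> k"
    using le_coprime_part[OF assms _ coprime_cofactor_of_stable_gcd[OF assms stable]]
    by (simp add: k_def g_def)
  then have "p \<le> k * g"
    using dvd_div_mult_self[OF gcd_dvd1[of p "b ^ n"]] mult_le_mono1 unfolding g_def by metis
  ultimately have "k * g = p" by (rule antisym)
  then show ?thesis unfolding k_def g_def by (rule that)
qed

lemma B_run_None: "foldl (B_step b I) None u = None"
  by (induction u) (auto simp: B_step_def)

lemma B_run_Some:
  "foldl (B_step b I) (Some i) u = Some j \<Longrightarrow> j = i * b ^ length u + word_value b u"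
proof (induction u arbitrary: i)
  case Nil
  then show ?case by (simp add: word_value_def)
next
  case (Cons a u)
  have "B_step b I (Some i) a = (if i * b + a \<le> Max I then Some (i * b + a) else None)"
    by (simp add: B_step_def)
  then have "foldl (B_step b I) (Some (i * b + a)) u = Some j"
    using Cons.prems by (simp add: B_run_None split: if_splits)
  then show ?case
    using Cons.IH foldl_horner[of b "i * b + a" u] foldl_horner[of b i "a # u"] by simp
qed

lemma B_run_le_Max:
  assumes "u \<noteq> []" and "foldl (B_step b I) t u = Some j"
  shows "j \<le> Max I"
proof -
  obtain v a where "u = v @ [a]" using assms(1) rev_exhaust by blast
  then show ?thesis
    using assms(2) by (auto simp: B_step_def split: option.splits if_splits)
qed

lemma B_run_dies:
  assumes "b > 1" and "t \<noteq> Some 0" and "length u > Max I"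
  shows "foldl (B_step b I) t u = None"
proof (rule ccontr)
  assume "foldl (B_step b I) t u \<noteq> None"
  then obtain j where j: "foldl (B_step b I) t u = Some j" by blast
  obtain i where i: "t = Some i" "i \<ge> 1"
    using j assms(2) B_run_None by (cases t) fastforce+
  have "length u < 2 ^ length u" by (rule less_exp)
  also have "\<dots> \<le> b ^ length u" using assms(1) by (simp add: power_mono)
  also have "\<dots> \<le> j" using B_run_Some[OF j[unfolded i(1)]] i(2) by (simp add: trans_le_add1)
  also have "j \<le> Max I" using B_run_le_Max[of u] j assms(3) by fastforce
  finally show False using assms(3) by simp
qed

lemma C_run_init_Some:
  assumes "C_run b p I C_init u = (s, Some j)"
  shows "s = j mod p"
proof (cases "u = []")
  case True
  then show ?thesis using assms by (simp add: C_run_def C_init_def)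
next
  case False
  then show ?thesis
    using assms A_run_nonempty[OF False] B_run_Some[of b I 0 u j] by (simp add: C_run_eq C_init_def)
qed

lemma C_states_not_init:
  assumes "(s, t) \<in> C_states b p I" and "(s, t) \<noteq> C_init"
  shows "t \<noteq> Some 0"
proof
  assume "t = Some 0"
  moreover obtain u where "C_run b p I C_init u = (s, t)"
    using assms(1) by (auto simp: C_states_def)
  ultimately have "s = 0" using C_run_init_Some by fastforce
  then show False using assms(2) \<open>t = Some 0\<close> by (simp add: C_init_def)
qed

theorem lemma42:
  fixes b p :: nat and R I :: "nat set" and s t s' t'
  assumes "b > 1" and "p \<ge> 1" and "R \<subseteq> {0..<p}"
    and "finite I" and "I \<noteq> {}"
    and "(s, t) \<in> C_states b p I" and "(s', t') \<in> C_states b p I"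
    and "s mod coprime_part b p = s' mod coprime_part b p"
    and "(s, t) \<noteq> C_init" and "(s', t') \<noteq> C_init"
  shows "ult_equiv b p I (s, t) (s', t')"
proof -
  have "t \<noteq> Some 0" "t' \<noteq> Some 0"
    using assms(6,7,9,10) C_states_not_init by blast+
  obtain n where p: "coprime_part b p * gcd p (b ^ n) = p"
    using coprime_part_mult_gcd_power[of p b] assms(2) by auto
  have "C_run b p I (s, t) u = C_run b p I (s', t') u"
    if long: "n + Max I + 1 \<le> length u" for u
  proof -
    have "gcd p (b ^ n) dvd b ^ length u"
      using long by (intro dvd_trans[OF gcd_dvd2 le_imp_power_dvd]) simp
    from mod_mult_dvd_cong[OF assms(8) this]
    have "s * b ^ length u mod p = s' * b ^ length u mod p" unfolding p .
    moreover have "foldl (B_step b I) t u = None" "foldl (B_step b I) t' u = None"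
      using B_run_dies assms(1) \<open>t \<noteq> Some 0\<close> \<open>t' \<noteq> Some 0\<close> long by simp_all
    moreover have "u \<noteq> []" using long by auto
    ultimately show ?thesis
      using A_run_nonempty[of u] by (simp add: C_run_eq) (metis mod_add_left_eq)
  qed
  then show ?thesis unfolding ult_equiv_def by (intro exI[of _ "n + Max I + 1"]) auto
qed

end
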